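(* Let $X=\{\mathbf{x}_1,\dots,\mathbf{x}_m\}\subset\mathbb{R}^n$ be a finite set of labeled points, with labels $y_i\in\{-1,1\}$, that is linearly separable. Let $(\mathbf{w},b)$ be the solution of the hard-margin SVM problem for $X$, let $\mathcal{P}=\{\mathbf{x}\in\mathbb{R}^n : \mathbf{w}^T\mathbf{x}+b=0\}$ be the separating hyperplane, and let $\rho\colon\mathbb{R}^n\to\mathcal{P}$ be the orthogonal projection onto $\mathcal{P}$. Let $S_+$ (resp. $S_-$) be the set of support vectors with label $+1$ (resp. $-1$). Then $\rho(\mathrm{conv}(S_+))\cap\rho(\mathrm{conv}(S_-))\neq\emptyset$.
   Context: Labeled points $X$ with labels $y_i\in\{-1,1\}$ (both labels occurring) are linearly separable if there is a hyperplane in $\mathbb{R}^n$ with all points labeled $+1$ strictly on one side and all points labeled $-1$ strictly on the other. The hard-margin SVM problem is: minimize $\frac12\|\mathbf{w}\|^2$ over $\mathbf{w}\in\mathbb{R}^n$, $b\in\mathbb{R}$, subject to $y_i(\mathbf{w}^T\mathbf{x}_i+b)\ge 1$ for all $i$. At the optimum, $\min_i|\mathbf{w}^T\mathbf{x}_i+b|=1$, and the support vectors are the points $\mathbf{x}_i$ with $|\mathbf{w}^T\mathbf{x}_i+b|=1$, i.e. $y_i(\mathbf{w}^T\mathbf{x}_i+b)=1$. $\mathrm{conv}(T)$ denotes the convex hull of $T$. *)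

theory Defs
  imports "HOL-Analysis.Analysis"
begin

definition linearly_separable :: "nat \<Rightarrow> (nat \<Rightarrow> 'a::euclidean_space) \<Rightarrow> (nat \<Rightarrow> real) \<Rightarrow> bool" where
  "linearly_separable m x y \<longleftrightarrow>
     (\<forall>i<m. y i \<in> {-1, 1}) \<and> (\<exists>i<m. y i = 1) \<and> (\<exists>i<m. y i = -1) \<and>
     (\<exists>w b. w \<noteq> 0 \<and> (\<forall>i<m. y i = 1 \<longrightarrow> inner w (x i) + b > 0)
                   \<and> (\<forall>i<m. y i = -1 \<longrightarrow> inner w (x i) + b < 0))"

definition svm_feasible :: "nat \<Rightarrow> (nat \<Rightarrow> 'a::euclidean_space) \<Rightarrow> (nat \<Rightarrow> real) \<Rightarrow> 'a \<Rightarrow> real \<Rightarrow> bool" where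
  "svm_feasible m x y w b \<longleftrightarrow> (\<forall>i<m. y i * (inner w (x i) + b) \<ge> 1)"

definition svm_solution :: "nat \<Rightarrow> (nat \<Rightarrow> 'a::euclidean_space) \<Rightarrow> (nat \<Rightarrow> real) \<Rightarrow> 'a \<Rightarrow> real \<Rightarrow> bool" where
  "svm_solution m x y w b \<longleftrightarrow> svm_feasible m x y w b \<and>
     (\<forall>w' b'. svm_feasible m x y w' b' \<longrightarrow> (1/2) * (norm w)^2 \<le> (1/2) * (norm w')^2)"

definition support_vectors :: "nat \<Rightarrow> (nat \<Rightarrow> 'a::euclidean_space) \<Rightarrow> (nat \<Rightarrow> real) \<Rightarrow> 'a \<Rightarrow> real \<Rightarrow> real \<Rightarrow> 'a set" where
  "support_vectors m x y w b l = {x i | i. i < m \<and> y i = l \<and> y i * (inner w (x i) + b) = 1}"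

end

theory Submission
  imports Defs
begin

text \<open>Suppose the projections of \<open>conv S\<^sub>+\<close> and \<open>conv S\<^sub>-\<close> onto the hyperplane
\<open>w\<^sup>Tz + b = 0\<close> were disjoint. These compact convex sets can then be strictly separated, and
the normal of the separating hyperplane may be taken orthogonal to \<open>w\<close>. This gives
\<open>u \<perp> w\<close> and \<open>c\<close> such that \<open>u\<^sup>Tx - c\<close> has the sign of the label on every support vector.
Tilting \<open>(w, b)\<close> to \<open>(w + e u, b - e c)\<close> raises every active constraint to at least
\<open>1 + e d\<close> for some \<open>d > 0\<close> and keeps the inactive ones satisfied for small \<open>e > 0\<close>.
Dividing by \<open>1 + e d\<close> gives a feasible pair of norm
\<open>\<surd>(\<parallel>w\<parallel>\<^sup>2 + e\<^sup>2\<parallel>u\<parallel>\<^sup>2) / (1 + e d) < \<parallel>w\<parallel>\<close>, contradicting optimality.\<close>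

lemma eventually_at_right_0_linear_pos:
  fixes a c :: real
  assumes "0 < a"
  shows "\<forall>\<^sub>F e in at_right 0. 0 < a + e * c"
proof -
  have "((\<lambda>e. a + e * c) \<longlongrightarrow> a + 0 * c) (at_right 0)"
    by (intro tendsto_intros)
  then show ?thesis
    using assms by (auto dest: order_tendstoD(1))
qed

lemma eventually_at_right_0_linear_nonneg:
  fixes a c :: real
  assumes "0 \<le> a" and "a = 0 \<Longrightarrow> 0 \<le> c"
  shows "\<forall>\<^sub>F e in at_right 0. 0 \<le> a + e * c"
proof (cases "a = 0")
  case True
  show ?thesis
    using eventually_at_right_less[of "0::real"] by eventually_elim (simp add: True assms(2))
next
  case False
  with assms(1) show ?thesis
    using eventually_at_right_0_linear_pos[of a c] by (auto elim: eventually_mono)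
qed

lemma norm_orthogonal_perturbation_less:
  fixes w u :: "'a::real_inner"
  assumes "w \<noteq> 0" and "inner u w = 0" and "0 < d"
  shows "\<forall>\<^sub>F e in at_right 0. norm (w + e *\<^sub>R u) < (1 + e * d) * norm w"
proof -
  have "\<forall>\<^sub>F e in at_right 0. 0 < 2 * d * (norm w)\<^sup>2 + e * (d\<^sup>2 * (norm w)\<^sup>2 - (norm u)\<^sup>2)"
    using assms by (intro eventually_at_right_0_linear_pos) simp
  then show ?thesis
    using eventually_at_right_less[of "0::real"]
  proof eventually_elim
    case (elim e)
    have "(norm (w + e *\<^sub>R u))\<^sup>2 = (norm w)\<^sup>2 + e\<^sup>2 * (norm u)\<^sup>2"
      using norm_add_Pythagorean[of w "e *\<^sub>R u"] assms(2)
      by (simp add: orthogonal_def inner_commute power_mult_distrib)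
    also have "\<dots> < ((1 + e * d) * norm w)\<^sup>2"
    proof -
      have "((1 + e * d) * norm w)\<^sup>2 - ((norm w)\<^sup>2 + e\<^sup>2 * (norm u)\<^sup>2)
          = e * (2 * d * (norm w)\<^sup>2 + e * (d\<^sup>2 * (norm w)\<^sup>2 - (norm u)\<^sup>2))"
        by (simp add: algebra_simps power2_eq_square)
      also have "\<dots> > 0"
        using elim by simp
      finally show ?thesis by simp
    qed
    finally show ?case
      by (rule power2_less_imp_less) (use elim assms in simp)
  qed
qed

lemma closest_point_hyperplane:
  fixes w :: "'a::euclidean_space"
  assumes "w \<noteq> 0"
  shows "closest_point {z. inner w z + b = 0} a = a - ((inner w a + b) / inner w w) *\<^sub>R w"
proof -
  let ?H = "{z. inner w z + b = 0}"
  define r where "r = a - ((inner w a + b) / inner w w) *\<^sub>R w"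
  have H: "?H = {z. inner w z = - b}"
    by (auto simp: algebra_simps)
  have r: "r \<in> ?H"
    using assms by (simp add: r_def inner_diff_right)
  have "dist a r \<le> dist a z" if "z \<in> ?H" for z
  proof -
    have "a - r = ((inner w a + b) / inner w w) *\<^sub>R w"
      by (simp add: r_def)
    moreover have "inner w (r - z) = 0"
      using that r by (simp add: inner_diff_right)
    ultimately have "orthogonal (a - r) (r - z)"
      by (simp add: orthogonal_def)
    then have "(dist a z)\<^sup>2 = (dist a r)\<^sup>2 + (norm (r - z))\<^sup>2"
      using norm_add_Pythagorean[of "a - r" "r - z"] by (simp add: dist_norm)
    then show ?thesis
      by (simp add: power2_le_imp_le)
  qed
  then have "r = closest_point ?H a"
    using r by (intro closest_point_unique) (auto simp: H convex_hyperplane closed_hyperplane)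
  then show ?thesis
    by (simp add: r_def)
qed

lemma closest_point_hyperplane_convex_hull:
  fixes w :: "'a::euclidean_space"
  assumes "w \<noteq> 0"
  shows "closest_point {z. inner w z + b = 0} ` (convex hull S)
       = convex hull (closest_point {z. inner w z + b = 0} ` S)"
proof -
  define L where "L z = z - (inner w z / inner w w) *\<^sub>R w" for z
  define k where "k = - (b / inner w w) *\<^sub>R w"
  have "linear L"
    by (rule linearI)
      (simp_all add: L_def inner_add_right add_divide_distrib scaleR_add_left scaleR_diff_right)
  have \<rho>: "closest_point {z. inner w z + b = 0} = (\<lambda>z. k + L z)"
    by (rule ext) (simp add: closest_point_hyperplane[OF assms] L_def k_def add_divide_distrib
        scaleR_add_left)
  have "(\<lambda>z. k + z) ` L ` (convex hull S) = convex hull ((\<lambda>z. k + z) ` L ` S)"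
    by (simp add: convex_hull_linear_image[OF \<open>linear L\<close>] convex_hull_translation)
  then show ?thesis
    by (simp add: \<rho> image_image)
qed

lemma inner_closest_point_hyperplane:
  fixes w :: "'a::euclidean_space"
  assumes "w \<noteq> 0"
  shows "inner a (closest_point {z. inner w z + b = 0} z)
       = inner (a - (inner a w / inner w w) *\<^sub>R w) z - b * inner a w / inner w w"
  unfolding closest_point_hyperplane[OF assms]
  by (simp add: inner_diff_left inner_diff_right
      add_divide_distrib algebra_simps inner_commute[of w z])

lemma separation_of_hyperplane_projections:
  fixes w :: "'a::euclidean_space"
  assumes "w \<noteq> 0"
    and "\<forall>z\<in>closest_point {z. inner w z + b = 0} ` S. inner a z < c"
    and "\<forall>z\<in>closest_point {z. inner w z + b = 0} ` T. c < inner a z"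
  shows "\<exists>u c'. inner u w = 0 \<and> (\<forall>z\<in>S. inner u z < c') \<and> (\<forall>z\<in>T. c' < inner u z)"
proof (intro exI conjI)
  let ?u = "a - (inner a w / inner w w) *\<^sub>R w"
  show "inner ?u w = 0"
    using assms(1) by (simp add: inner_diff_left)
  show "\<forall>z\<in>S. inner ?u z < c + b * inner a w / inner w w"
    using assms(2) by (fastforce simp: inner_closest_point_hyperplane[OF assms(1)])
  show "\<forall>z\<in>T. c + b * inner a w / inner w w < inner ?u z"
    using assms(3) by (fastforce simp: inner_closest_point_hyperplane[OF assms(1)])
qed

lemma separating_hyperplane_compact_compact:
  fixes S T :: "'a::euclidean_space set"
  assumes "convex S" "compact S" "convex T" "compact T" "S \<inter> T = {}"
  shows "\<exists>a c. (\<forall>z\<in>S. inner a z < c) \<and> (\<forall>z\<in>T. c < inner a z)"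
proof (cases "T = {}")
  case True
  then show ?thesis
    by (intro exI[of _ 0] exI[of _ 1]) simp
next
  case False
  then show ?thesis
    using separating_hyperplane_closed_compact[OF assms(1) compact_imp_closed[OF assms(2)]
        assms(3,4) False assms(5)] by blast
qed

lemma finite_support_vectors: "finite (support_vectors m x y w b l)"
  unfolding support_vectors_def by (rule finite_subset[of _ "x ` {..<m}"]) auto

lemma svm_solution_nonzero:
  assumes "linearly_separable m x y" and "svm_solution m x y w b"
  shows "w \<noteq> 0"
proof
  assume "w = 0"
  obtain i j where "i < m" "j < m" "y i = 1" "y j = -1"
    using assms(1) by (auto simp: linearly_separable_def)
  with \<open>w = 0\<close> have "1 \<le> b" and "1 \<le> - b"
    using assms(2) unfolding svm_solution_def svm_feasible_def
    by (metis inner_zero_left add_0 mult_1 mult_minus1)+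
  then show False
    by simp
qed

lemma svm_solution_norm_le:
  assumes "svm_solution m x y w b" and "svm_feasible m x y w' b'"
  shows "norm w \<le> norm w'"
  using assms unfolding svm_solution_def by (auto intro: power2_le_imp_le)

lemma svm_feasible_rescale:
  assumes "0 < t" and "\<forall>i<m. t \<le> y i * (inner w (x i) + b)"
  shows "svm_feasible m x y ((1 / t) *\<^sub>R w) (b / t)"
  using assms unfolding svm_feasible_def by (auto simp: field_simps)

lemma svm_perturbation_margin:
  assumes "svm_feasible m x y w b"
    and "\<forall>i<m. y i * (inner w (x i) + b) = 1 \<longrightarrow> d \<le> y i * (inner u (x i) - c)"
  shows "\<forall>\<^sub>F e in at_right 0. \<forall>i<m.
           1 + e * d \<le> y i * (inner (w + e *\<^sub>R u) (x i) + (b - e * c))"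
proof -
  have "\<forall>\<^sub>F e in at_right 0.
          0 \<le> (y i * (inner w (x i) + b) - 1) + e * (y i * (inner u (x i) - c) - d)"
    if "i < m" for i
    using assms that by (intro eventually_at_right_0_linear_nonneg) (auto simp: svm_feasible_def)
  then have "\<forall>\<^sub>F e in at_right 0. \<forall>i\<in>{..<m}.
          0 \<le> (y i * (inner w (x i) + b) - 1) + e * (y i * (inner u (x i) - c) - d)"
    by (auto intro: eventually_ball_finite)
  then show ?thesis
    by eventually_elim (auto simp: algebra_simps inner_add_left)
qed

lemma svm_solution_no_orthogonal_separator:
  assumes sol: "svm_solution m x y w b" and "w \<noteq> 0" and "inner u w = 0"
    and sep: "\<forall>i<m. y i * (inner w (x i) + b) = 1 \<longrightarrow> 0 < y i * (inner u (x i) - c)"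
  shows False
proof -
  define I where "I = {i. i < m \<and> y i * (inner w (x i) + b) = 1}"
  \<comment> \<open>the \<open>1\<close> keeps \<open>Min\<close> meaningful when no constraint is active\<close>
  define d where "d = Min (insert 1 ((\<lambda>i. y i * (inner u (x i) - c)) ` I))"
  have "finite I"
    by (simp add: I_def)
  then have "0 < d"
    and d_le: "\<forall>i<m. y i * (inner w (x i) + b) = 1 \<longrightarrow> d \<le> y i * (inner u (x i) - c)"
    using sep by (auto simp: d_def I_def)
  have "svm_feasible m x y w b"
    using sol by (simp add: svm_solution_def)
  have "\<forall>\<^sub>F e in at_right 0. (0::real) < e"
    by (fact eventually_at_right_less[of "0::real"])
  moreover note svm_perturbation_margin[OF \<open>svm_feasible m x y w b\<close> d_le]
  moreover note norm_orthogonal_perturbation_less[OF \<open>w \<noteq> 0\<close> \<open>inner u w = 0\<close> \<open>0 < d\<close>]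
  ultimately have "\<forall>\<^sub>F e in at_right 0. 0 < e
      \<and> (\<forall>i<m. 1 + e * d \<le> y i * (inner (w + e *\<^sub>R u) (x i) + (b - e * c)))
      \<and> norm (w + e *\<^sub>R u) < (1 + e * d) * norm w"
    by eventually_elim blast
  then obtain e where "0 < e"
      and margin: "\<forall>i<m. 1 + e * d \<le> y i * (inner (w + e *\<^sub>R u) (x i) + (b - e * c))"
      and shorter: "norm (w + e *\<^sub>R u) < (1 + e * d) * norm w"
    using eventually_happens'[OF trivial_limit_at_right_real] by blast
  define t where "t = 1 + e * d"
  have "0 < t"
    using \<open>0 < e\<close> \<open>0 < d\<close> by (simp add: t_def add_pos_pos)
  have "svm_feasible m x y ((1 / t) *\<^sub>R (w + e *\<^sub>R u)) ((b - e * c) / t)"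
    using \<open>0 < t\<close> margin by (intro svm_feasible_rescale) (simp_all add: t_def)
  then have "norm w \<le> norm ((1 / t) *\<^sub>R (w + e *\<^sub>R u))"
    by (rule svm_solution_norm_le[OF sol])
  also have "\<dots> < norm w"
    using shorter \<open>0 < t\<close> by (simp add: t_def divide_less_eq mult.commute)
  finally show False
    by simp
qed

theorem lemma4p1:
  fixes x :: "nat \<Rightarrow> 'a::euclidean_space" and y :: "nat \<Rightarrow> real" and m :: nat
    and w :: 'a and b :: real
  assumes "linearly_separable m x y"
    and "svm_solution m x y w b"
  shows "closest_point {z. inner w z + b = 0} ` (convex hull (support_vectors m x y w b 1))
       \<inter> closest_point {z. inner w z + b = 0} ` (convex hull (support_vectors m x y w b (-1))) \<noteq> {}"
proof
  let ?\<rho> = "closest_point {z. inner w z + b = 0}"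
  let ?hull = "\<lambda>l. ?\<rho> ` (convex hull (support_vectors m x y w b l))"
  assume disjoint: "?hull 1 \<inter> ?hull (-1) = {}"
  have "w \<noteq> 0"
    using assms by (rule svm_solution_nonzero)
  have labels: "\<forall>i<m. y i \<in> {-1, 1}"
    using assms(1) by (simp add: linearly_separable_def)
  from \<open>w \<noteq> 0\<close> have "convex (?hull l)" "compact (?hull l)" for l
    by (simp_all add: closest_point_hyperplane_convex_hull finite_imp_compact_convex_hull
        finite_support_vectors)
  then obtain a c
    where a_neg: "\<forall>z\<in>?hull (-1). inner a z < c" and a_pos: "\<forall>z\<in>?hull 1. c < inner a z"
    using separating_hyperplane_compact_compact[of "?hull (-1)" "?hull 1"] disjoint by blast
  obtain u c' where "inner u w = 0"
      and neg: "\<forall>z\<in>convex hull (support_vectors m x y w b (-1)). inner u z < c'"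
      and pos: "\<forall>z\<in>convex hull (support_vectors m x y w b 1). c' < inner u z"
    using separation_of_hyperplane_projections[OF \<open>w \<noteq> 0\<close> a_neg a_pos] by blast
  have "0 < y i * (inner u (x i) - c')" if "i < m" and "y i * (inner w (x i) + b) = 1" for i
  proof -
    have "x i \<in> convex hull (support_vectors m x y w b (y i))"
      using that by (auto simp: support_vectors_def intro: hull_inc)
    moreover have "y i = 1 \<or> y i = -1"
      using labels \<open>i < m\<close> by auto
    ultimately show ?thesis
      using neg pos by auto
  qed
  then show False
    using svm_solution_no_orthogonal_separator[OF assms(2) \<open>w \<noteq> 0\<close> \<open>inner u w = 0\<close>]
    by blast
qed

end
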